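(* Let $J\ge1$ and let $\boldsymbol\lambda_j^0=(\alpha_j^0,\sigma_j^0)$, $j=1,\dots,J$, with $\max_j|\alpha_j^0|<1$ and $\min_j\sigma_j^0>0$. For $\boldsymbol\lambda=(\alpha,\sigma)$ with $|\alpha|<1$ let $h(\boldsymbol\lambda,\theta)=\frac{\sigma^2}{|1-\alpha e^{i\theta}|^2}=\gamma_0(\boldsymbol\lambda)+2\sum_{\ell\ge1}\gamma_\ell(\boldsymbol\lambda)\cos(\ell\theta)$, $\gamma_\ell(\boldsymbol\lambda)=\sigma^2\alpha^\ell/(1-\alpha^2)$, be the spectral density of the univariate AR(1) process $x_t=\alpha x_{t-1}+\sigma z_t$ driven by unit-variance white noise. If $\alpha_1^0,\dots,\alpha_J^0$ are all distinct, then the $J\times J$ matrix $$\mathbf{G}(\boldsymbol\Lambda_J^0)=\frac{1}{2\pi}\int_0^{2\pi}\underline{\mathbf{h}}^0(\theta)(\underline{\mathbf{h}}^0(\theta))^T\,d\theta,\qquad\underline{\mathbf{h}}^0(\theta)=(h(\boldsymbol\lambda_j^0,\theta))_{j=1}^J,$$ is positive definite.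
   Context: This concerns a $p$-dimensional AR(1) process $X_t=\mathbf{A}X_{t-1}+\Sigma^{1/2}Z_t$ with $\mathbf{A},\Sigma$ symmetric/Hermitian, $\|\mathbf{A}\|<1$, simultaneously diagonalized by a unitary $\mathbf{U}$ with $\mathbf{U}^*\mathbf{A}\mathbf{U}=\mathrm{diag}(\alpha_k)$, $\mathbf{U}^*\Sigma\mathbf{U}=\mathrm{diag}(\sigma_k^2)$, whose joint spectrum of $(\mathbf{A},\Sigma)$ is $\sum_{j=1}^J\omega_j\delta_{\boldsymbol\lambda_j^0}$; $h(\boldsymbol\lambda_j^0,\cdot)$ is then the spectral density of the $j$-th type of coordinate process. *)

theory Defs
  imports "HOL-Analysis.Analysis"
begin

definition ar1_spec_density :: "real \<Rightarrow> real \<Rightarrow> real \<Rightarrow> real" where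
  "ar1_spec_density \<alpha> \<sigma> \<theta> = \<sigma>\<^sup>2 / (cmod (1 - complex_of_real \<alpha> * exp (\<i> * complex_of_real \<theta>)))\<^sup>2"

definition G_matrix :: "(nat \<Rightarrow> real) \<Rightarrow> (nat \<Rightarrow> real) \<Rightarrow> nat \<Rightarrow> nat \<Rightarrow> real" where
  "G_matrix \<alpha> \<sigma> i j = (1 / (2 * pi)) *
     integral {0..2*pi} (\<lambda>\<theta>. ar1_spec_density (\<alpha> i) (\<sigma> i) \<theta> * ar1_spec_density (\<alpha> j) (\<sigma> j) \<theta>)"

definition pos_definite :: "nat \<Rightarrow> (nat \<Rightarrow> nat \<Rightarrow> real) \<Rightarrow> bool" where
  "pos_definite J M \<longleftrightarrow>
     (\<forall>i<J. \<forall>j<J. M i j = M j i) \<and>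
     (\<forall>x :: nat \<Rightarrow> real. (\<exists>i<J. x i \<noteq> 0) \<longrightarrow> (\<Sum>i<J. \<Sum>j<J. x i * M i j * x j) > 0)"

end

theory Submission
  imports Defs "HOL-Computational_Algebra.Polynomial"
begin

text \<open>
  Writing \<open>h\<^sub>j = h(\<lambda>\<^sub>j\<^sup>0, \<cdot>)\<close>, the quadratic form of \<open>G\<close> at \<open>x\<close> is
  \<open>(2\<pi>)\<^sup>-\<^sup>1 \<integral>\<^sub>0\<^sup>2\<^sup>\<pi> (\<Sum>\<^sub>j x\<^sub>j h\<^sub>j)\<^sup>2\<close>, which is positive unless the continuous function
  \<open>\<Sum>\<^sub>j x\<^sub>j h\<^sub>j\<close> vanishes identically. Since
  \<open>h\<^sub>j(\<theta>) = \<sigma>\<^sub>j\<^sup>2 / (1 + \<alpha>\<^sub>j\<^sup>2 - 2\<alpha>\<^sub>j cos \<theta>)\<close>, that would make a combination of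
  reciprocals of affine functions of \<open>c = cos \<theta>\<close> vanish on \<open>[-1,1]\<close>. Clearing
  denominators gives a polynomial with infinitely many roots, hence the zero polynomial, and
  evaluating it at the root of each denominator isolates one coefficient. The roots
  \<open>(1 + \<alpha>\<^sub>j\<^sup>2) / (2\<alpha>\<^sub>j)\<close> are pairwise distinct because
  \<open>(1 + \<alpha>\<^sub>j\<^sup>2) \<alpha>\<^sub>k - (1 + \<alpha>\<^sub>k\<^sup>2) \<alpha>\<^sub>j = (\<alpha>\<^sub>k - \<alpha>\<^sub>j)(1 - \<alpha>\<^sub>j \<alpha>\<^sub>k)\<close> and \<open>|\<alpha>\<^sub>j \<alpha>\<^sub>k| < 1\<close>.
\<close>

lemma prod_mult_sum_divide:
  fixes D w :: "'i \<Rightarrow> 'a::field"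
  assumes "finite I" and "\<And>k. k \<in> I \<Longrightarrow> D k \<noteq> 0"
  shows "(\<Prod>k\<in>I. D k) * (\<Sum>i\<in>I. w i / D i) = (\<Sum>i\<in>I. w i * (\<Prod>k\<in>I - {i}. D k))"
  unfolding sum_distrib_left
proof (rule sum.cong)
  fix i assume "i \<in> I"
  then have "(\<Prod>k\<in>I. D k) = D i * (\<Prod>k\<in>I - {i}. D k)"
    using prod.remove[OF \<open>finite I\<close>] by blast
  with \<open>i \<in> I\<close> assms(2) show "(\<Prod>k\<in>I. D k) * (w i / D i) = w i * (\<Prod>k\<in>I - {i}. D k)"
    by (simp add: field_simps)
qed simp

lemma sum_prod_others_at_zero:
  fixes D w :: "'i \<Rightarrow> 'a::comm_ring_1"
  assumes "finite I" and "j \<in> I" and "D j = 0"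
  shows "(\<Sum>i\<in>I. w i * (\<Prod>k\<in>I - {i}. D k)) = w j * (\<Prod>k\<in>I - {j}. D k)"
proof -
  have "(\<Prod>k\<in>I - {i}. D k) = 0" if "i \<in> I - {j}" for i
    using that assms by (intro prod_zero) auto
  then have "(\<Sum>i\<in>I - {j}. w i * (\<Prod>k\<in>I - {i}. D k)) = 0"
    by simp
  then show ?thesis
    using sum.remove[OF assms(1,2), of "\<lambda>i. w i * (\<Prod>k\<in>I - {i}. D k)"] by simp
qed

lemma reciprocals_of_affine_linear_independent:
  fixes u v w :: "'i \<Rightarrow> real" and S :: "real set"
  assumes "finite I" and "infinite S"
    and nonzero: "\<And>k c. k \<in> I \<Longrightarrow> c \<in> S \<Longrightarrow> u k + v k * c \<noteq> 0"
    and distinct_roots: "\<And>j k. j \<in> I \<Longrightarrow> k \<in> I \<Longrightarrow> j \<noteq> k \<Longrightarrow> u j * v k \<noteq> u k * v j"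
    and vanish: "\<And>c. c \<in> S \<Longrightarrow> (\<Sum>i\<in>I. w i / (u i + v i * c)) = 0"
    and "j \<in> I"
  shows "w j = 0"
proof -
  define P where "P = (\<Sum>i\<in>I. smult (w i) (\<Prod>k\<in>I - {i}. [:u k, v k:]))"
  have poly_P: "poly P c = (\<Sum>i\<in>I. w i * (\<Prod>k\<in>I - {i}. u k + v k * c))" for c
    by (simp add: P_def poly_sum poly_prod mult.commute)
  have "S \<subseteq> {c. poly P c = 0}"
  proof
    fix c assume "c \<in> S"
    then have "poly P c = (\<Prod>k\<in>I. u k + v k * c) * (\<Sum>i\<in>I. w i / (u i + v i * c))"
      using prod_mult_sum_divide[OF \<open>finite I\<close>, of "\<lambda>k. u k + v k * c" w] nonzero poly_P by simp
    with \<open>c \<in> S\<close> vanish show "c \<in> {c. poly P c = 0}" by simp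
  qed
  then have P0: "P = 0"
    using \<open>infinite S\<close> poly_roots_finite finite_subset by blast
  have at_root: "w i = 0" if "i \<in> I" and "v i \<noteq> 0" for i
  proof -
    define r where "r = - u i / v i"
    have "u k + v k * r \<noteq> 0" if "k \<in> I - {i}" for k
    proof -
      have "(u k + v k * r) * v i = u k * v i - u i * v k"
        using \<open>v i \<noteq> 0\<close> by (simp add: r_def field_simps)
      then show ?thesis using distinct_roots \<open>i \<in> I\<close> that by force
    qed
    then have "(\<Prod>k\<in>I - {i}. u k + v k * r) \<noteq> 0"
      using \<open>finite I\<close> by simp
    moreover have "u i + v i * r = 0"
      using \<open>v i \<noteq> 0\<close> by (simp add: r_def)
    ultimately show ?thesis
      using P0 poly_P[of r] sum_prod_others_at_zero[OF \<open>finite I\<close> \<open>i \<in> I\<close>, of "\<lambda>k. u k + v k * r" w]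
      by simp
  qed
  show ?thesis
  proof (cases "v j = 0")
    case True
    obtain c where "c \<in> S"
      using \<open>infinite S\<close> by (metis ex_in_conv finite.emptyI)
    \<comment> \<open>a constant denominator forces every other denominator to have a root\<close>
    have "w i = 0" if "i \<in> I - {j}" for i
      using that at_root distinct_roots[of j i] \<open>j \<in> I\<close> True by auto
    then have "(\<Sum>i\<in>I. w i / (u i + v i * c)) = w j / u j"
      using sum.remove[OF \<open>finite I\<close> \<open>j \<in> I\<close>, of "\<lambda>i. w i / (u i + v i * c)"] True
      by simp
    then show ?thesis
      using vanish[OF \<open>c \<in> S\<close>] nonzero[OF \<open>j \<in> I\<close> \<open>c \<in> S\<close>] True by simp
  next
    case False
    then show ?thesis using at_root \<open>j \<in> I\<close> by blast
  qed
qed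

lemma ar1_spec_density_eq:
  "ar1_spec_density a s \<theta> = s\<^sup>2 / (1 + a\<^sup>2 - 2 * a * cos \<theta>)"
proof -
  have "(cmod (1 - complex_of_real a * exp (\<i> * complex_of_real \<theta>)))\<^sup>2
        = (1 - a * cos \<theta>)\<^sup>2 + (a * sin \<theta>)\<^sup>2"
    by (simp add: cmod_power2 exp_Euler cos_of_real sin_of_real)
  also have "\<dots> = 1 + a\<^sup>2 * ((sin \<theta>)\<^sup>2 + (cos \<theta>)\<^sup>2) - 2 * a * cos \<theta>"
    by algebra
  finally show ?thesis
    unfolding ar1_spec_density_def by simp
qed

lemma ar1_denominator_pos:
  fixes a c :: real
  assumes "\<bar>a\<bar> < 1" and "\<bar>c\<bar> \<le> 1"
  shows "1 + a\<^sup>2 - 2 * a * c > 0"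
proof -
  have "a * c \<le> \<bar>a\<bar>"
    using assms(2) abs_mult[of a c] mult_left_le[of "\<bar>c\<bar>" "\<bar>a\<bar>"] abs_ge_self[of "a * c"]
    by simp
  moreover have "(1 - \<bar>a\<bar>)\<^sup>2 > 0"
    using assms(1) by simp
  moreover have "(1 - \<bar>a\<bar>)\<^sup>2 = 1 + a\<^sup>2 - 2 * \<bar>a\<bar>"
    by (simp add: power2_eq_square algebra_simps)
  ultimately show ?thesis by linarith
qed

lemma continuous_on_ar1_spec_density:
  assumes "\<bar>a\<bar> < 1"
  shows "continuous_on S (ar1_spec_density a s)"
proof -
  have "1 + a\<^sup>2 - 2 * a * cos \<theta> \<noteq> 0" for \<theta>
    using ar1_denominator_pos[OF assms abs_cos_le_one, of \<theta>] by linarith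
  then have "continuous_on S (\<lambda>\<theta>. s\<^sup>2 / (1 + a\<^sup>2 - 2 * a * cos \<theta>))"
    by (intro continuous_intros) auto
  then show ?thesis
    unfolding ar1_spec_density_eq .
qed

lemma ar1_spec_densities_linear_independent:
  fixes \<alpha> \<sigma> x :: "'i \<Rightarrow> real"
  assumes "finite I"
    and "\<And>j. j \<in> I \<Longrightarrow> \<bar>\<alpha> j\<bar> < 1" and "\<And>j. j \<in> I \<Longrightarrow> \<sigma> j \<noteq> 0" and "inj_on \<alpha> I"
    and vanish: "\<And>\<theta>. \<theta> \<in> {0..pi} \<Longrightarrow> (\<Sum>j\<in>I. x j * ar1_spec_density (\<alpha> j) (\<sigma> j) \<theta>) = 0"
    and "j \<in> I"
  shows "x j = 0"
proof -
  have "x j * (\<sigma> j)\<^sup>2 = 0"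
  proof (rule reciprocals_of_affine_linear_independent
      [where u = "\<lambda>k. 1 + (\<alpha> k)\<^sup>2" and v = "\<lambda>k. - 2 * \<alpha> k" and S = "{-1..1}"])
    show "1 + (\<alpha> k)\<^sup>2 + - 2 * \<alpha> k * c \<noteq> 0" if "k \<in> I" "c \<in> {-1..1}" for k c
      using ar1_denominator_pos[of "\<alpha> k" c] assms(2)[OF that(1)] that(2) by (auto simp: abs_le_iff)
    show "(1 + (\<alpha> i)\<^sup>2) * (- 2 * \<alpha> k) \<noteq> (1 + (\<alpha> k)\<^sup>2) * (- 2 * \<alpha> i)"
      if "i \<in> I" "k \<in> I" "i \<noteq> k" for i k
    proof -
      have "\<alpha> i \<noteq> \<alpha> k"
        using \<open>inj_on \<alpha> I\<close> that by (auto dest: inj_onD)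
      moreover have "\<alpha> i * \<alpha> k < 1"
        using assms(2) that abs_mult[of "\<alpha> i" "\<alpha> k"] mult_strict_mono'[of "\<bar>\<alpha> i\<bar>" 1 "\<bar>\<alpha> k\<bar>" 1]
        by (simp add: abs_less_iff)
      moreover have "(1 + (\<alpha> i)\<^sup>2) * (- 2 * \<alpha> k) - (1 + (\<alpha> k)\<^sup>2) * (- 2 * \<alpha> i)
          = 2 * (\<alpha> i - \<alpha> k) * (1 - \<alpha> i * \<alpha> k)"
        by (simp add: power2_eq_square algebra_simps)
      ultimately show ?thesis
        by (metis eq_iff_diff_eq_0 less_irrefl mult_eq_0_iff zero_neq_numeral)
    qed
    show "(\<Sum>k\<in>I. x k * (\<sigma> k)\<^sup>2 / (1 + (\<alpha> k)\<^sup>2 + - 2 * \<alpha> k * c)) = 0" if "c \<in> {-1..1}" for c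
    proof -
      have "arccos c \<in> {0..pi}" and "cos (arccos c) = c"
        using that arccos_lbound arccos_ubound cos_arccos by auto
      then show ?thesis
        using vanish[of "arccos c"] by (simp add: ar1_spec_density_eq)
    qed
  qed (use assms in auto)
  then show ?thesis
    using assms(3)[OF \<open>j \<in> I\<close>] by simp
qed

lemma quadratic_form_integral_products:
  fixes f :: "'i \<Rightarrow> real \<Rightarrow> real" and x :: "'i \<Rightarrow> real"
  assumes "finite I" and cont: "\<And>i. i \<in> I \<Longrightarrow> continuous_on {a..b} (f i)"
  shows "(\<Sum>i\<in>I. \<Sum>j\<in>I. x i * integral {a..b} (\<lambda>t. f i t * f j t) * x j)
       = integral {a..b} (\<lambda>t. (\<Sum>i\<in>I. x i * f i t)\<^sup>2)"
proof -
  have int: "(\<lambda>t. x i * x j * (f i t * f j t)) integrable_on {a..b}" if "i \<in> I" "j \<in> I" for i j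
    using cont that by (intro integrable_continuous_interval continuous_intros) auto
  have "integral {a..b} (\<lambda>t. (\<Sum>i\<in>I. x i * f i t)\<^sup>2)
      = integral {a..b} (\<lambda>t. \<Sum>i\<in>I. \<Sum>j\<in>I. x i * x j * (f i t * f j t))"
    unfolding power2_eq_square sum_product by (simp add: algebra_simps)
  also have "\<dots> = (\<Sum>i\<in>I. \<Sum>j\<in>I. integral {a..b} (\<lambda>t. x i * x j * (f i t * f j t)))"
    using int \<open>finite I\<close> by (simp add: integral_sum integrable_sum)
  also have "\<dots> = (\<Sum>i\<in>I. \<Sum>j\<in>I. x i * integral {a..b} (\<lambda>t. f i t * f j t) * x j)"
    by (simp add: algebra_simps)
  finally show ?thesis ..
qed

lemma integral_square_pos:
  fixes g :: "real \<Rightarrow> real"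
  assumes "continuous_on {a..b} g" and "a < b" and "t \<in> {a..b}" and "g t \<noteq> 0"
  shows "integral {a..b} (\<lambda>t. (g t)\<^sup>2) > 0"
proof -
  have cont: "continuous_on {a..b} (\<lambda>t. (g t)\<^sup>2)"
    using assms(1) by (intro continuous_intros)
  then have "integral {a..b} (\<lambda>t. (g t)\<^sup>2) \<ge> 0"
    by (intro integral_nonneg integrable_continuous_interval) auto
  moreover have "integral {a..b} (\<lambda>t. (g t)\<^sup>2) \<noteq> 0"
    using integral_eq_0_iff[OF cont \<open>a < b\<close>] assms(3,4) by auto
  ultimately show ?thesis by simp
qed

lemma G_matrix_quadratic_form:
  assumes "\<forall>j<J. \<bar>\<alpha> j\<bar> < 1"
  shows "(\<Sum>i<J. \<Sum>j<J. x i * G_matrix \<alpha> \<sigma> i j * x j)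
       = integral {0..2*pi} (\<lambda>\<theta>. (\<Sum>j<J. x j * ar1_spec_density (\<alpha> j) (\<sigma> j) \<theta>)\<^sup>2) / (2 * pi)"
proof -
  have "(\<Sum>i<J. \<Sum>j<J. x i * G_matrix \<alpha> \<sigma> i j * x j) = (\<Sum>i<J. \<Sum>j<J.
      x i * integral {0..2*pi} (\<lambda>\<theta>. ar1_spec_density (\<alpha> i) (\<sigma> i) \<theta> * ar1_spec_density (\<alpha> j) (\<sigma> j) \<theta>) * x j)
      / (2 * pi)"
    unfolding G_matrix_def by (simp add: sum_divide_distrib)
  also have "\<dots> = integral {0..2*pi} (\<lambda>\<theta>. (\<Sum>j<J. x j * ar1_spec_density (\<alpha> j) (\<sigma> j) \<theta>)\<^sup>2) / (2 * pi)"
    using assms by (subst quadratic_form_integral_products) (auto intro: continuous_on_ar1_spec_density)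
  finally show ?thesis .
qed

theorem proposition3:
  fixes J :: nat and \<alpha> \<sigma> :: "nat \<Rightarrow> real"
  assumes "J \<ge> 1"
    and "\<forall>j<J. \<bar>\<alpha> j\<bar> < 1"
    and "\<forall>j<J. \<sigma> j > 0"
    and "inj_on \<alpha> {..<J}"
  shows "pos_definite J (G_matrix \<alpha> \<sigma>)"
  unfolding pos_definite_def
proof (intro conjI allI impI)
  fix i j
  show "G_matrix \<alpha> \<sigma> i j = G_matrix \<alpha> \<sigma> j i"
    unfolding G_matrix_def by (simp add: mult.commute)
next
  fix x :: "nat \<Rightarrow> real"
  assume "\<exists>i<J. x i \<noteq> 0"
  define f where "f \<theta> = (\<Sum>j<J. x j * ar1_spec_density (\<alpha> j) (\<sigma> j) \<theta>)" for \<theta>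
  have "\<exists>\<theta>\<in>{0..pi}. f \<theta> \<noteq> 0"
    using ar1_spec_densities_linear_independent[of "{..<J}" \<alpha> \<sigma> x] assms(2-4)
      \<open>\<exists>i<J. x i \<noteq> 0\<close> unfolding f_def by fastforce
  moreover have "{0..pi} \<subseteq> {0..2*pi}"
    using pi_ge_zero by auto
  ultimately obtain \<theta> where "\<theta> \<in> {0..2*pi}" "f \<theta> \<noteq> 0"
    by blast
  moreover have "continuous_on {0..2*pi} f"
    unfolding f_def using assms(2) by (intro continuous_intros continuous_on_ar1_spec_density) auto
  ultimately have "integral {0..2*pi} (\<lambda>\<theta>. (f \<theta>)\<^sup>2) > 0"
    by (intro integral_square_pos) auto
  then show "(\<Sum>i<J. \<Sum>j<J. x i * G_matrix \<alpha> \<sigma> i j * x j) > 0"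
    unfolding G_matrix_quadratic_form[OF assms(2)] f_def by simp
qed

end
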